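(* In the setting described in the context, if a linear operator $T:\mathcal{H}\to\mathcal{H}$ is compact and $\psi_z\to0$ weakly in $H_2$ as $z\to\infty$, then $T$ is weakly compact.
   Context: Setting: $H_1,H_2$ are separable Hilbert spaces, $G$ is a separable locally compact group with left Haar measure $dz$. $\{E_N\}_{N\in\mathbb{N}}$ is a fixed sequence of open precompact subsets of $G$ with $E_N\subseteq E_{N+1}$, $E_N^{-1}=E_N$, $E_NE_N\subseteq E_{2N}$, $\bigcup_NE_N=G$. $\{\psi_z\}_{z\in G}\subseteq H_2$ is a bounded, norm-continuous family forming a continuous Parseval frame: $\langle f,g\rangle_{H_2}=\int_G\langle f,\psi_z\rangle\langle\psi_z,g\rangle\,dz$. $\mathcal{H}=H_1\widehat\otimes H_2$ is the Hilbert space tensor product. For $f\in\mathcal{H}$, $g\in H_2$, $\langle f,g\rangle_{H_2}\in H_1$ is the continuous extension of $\sum c_na_n\otimes b_n\mapsto\sum c_na_n\langle b_n,g\rangle_{H_2}$. For linear $T$ on $\mathcal{H}$ and $z,w\in G$, $T_{(z,w)}h:=\langle T(h\otimes\psi_z),\psi_w\rangle_{H_2}$ for $h\in H_1$. $T$ is weakly compact if each $T_{(z,w)}$ is compact on $H_1$ and for every $M>0$, $\lim_{z\to\infty}\sup_{w\in zE_M}\|T_{(z,w)}\|_{H_1\to H_1}=0$; here $z\to\infty$ means $z$ eventually leaves every compact subset of $G$. *)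

theory Defs
  imports "HOL-Analysis.Analysis"
begin

text \<open>The inner product is linear in the first
argument and conjugate linear in the second; the norm is the one induced by it.\<close>

class complex_vector = real_vector +
  fixes scaleC :: "complex \<Rightarrow> 'a \<Rightarrow> 'a"
  assumes scaleC_add_right: "scaleC a (x + y) = scaleC a x + scaleC a y"
    and scaleC_add_left: "scaleC (a + b) x = scaleC a x + scaleC b x"
    and scaleC_scaleC: "scaleC a (scaleC b x) = scaleC (a * b) x"
    and scaleC_one: "scaleC 1 x = x"
    and scaleR_scaleC: "scaleR r x = scaleC (complex_of_real r) x"

class complex_inner = complex_vector + real_normed_vector +
  fixes cinner :: "'a \<Rightarrow> 'a \<Rightarrow> complex"
  assumes cinner_commute: "cinner x y = cnj (cinner y x)"
    and cinner_add_left: "cinner (x + y) z = cinner x z + cinner y z"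
    and cinner_scaleC_left: "cinner (scaleC r x) y = r * cinner x y"
    and cinner_pos: "Im (cinner x x) = 0 \<and> Re (cinner x x) \<ge> 0"
    and cinner_eq_zero_iff: "cinner x x = 0 \<longleftrightarrow> x = 0"
    and norm_eq_sqrt_cinner: "norm x = sqrt (Re (cinner x x))"

class chilbert_space = complex_inner + complete_space

definition clinear :: "('a::complex_vector \<Rightarrow> 'b::complex_vector) \<Rightarrow> bool" where
  "clinear f \<longleftrightarrow> (\<forall>x y. f (x + y) = f x + f y) \<and> (\<forall>c x. f (scaleC c x) = scaleC c (f x))"

definition cspan :: "'a::complex_vector set \<Rightarrow> 'a set" where
  "cspan S = {x. \<exists>F c. finite F \<and> F \<subseteq> S \<and> x = (\<Sum>v\<in>F. scaleC (c v) v)}"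

definition compact_operator :: "('a::complex_inner \<Rightarrow> 'b::complex_inner) \<Rightarrow> bool" where
  "compact_operator T \<longleftrightarrow> clinear T \<and> compact (closure (T ` ball 0 1))"

definition separable_type :: "'a::topological_space itself \<Rightarrow> bool" where
  "separable_type _ \<longleftrightarrow> (\<exists>D::'a set. countable D \<and> closure D = UNIV)"

text \<open>\<open>tp\<close> realises the Hilbert space tensor product \<open>H1 \<otimes> H2\<close> inside the Hilbert
space \<open>'h\<close>: it is bilinear, satisfies \<open>\<langle>a\<otimes>b, c\<otimes>d\<rangle> = \<langle>a,c\<rangle>\<langle>b,d\<rangle>\<close>, and the span of the
elementary tensors is dense. This determines \<open>'h\<close> up to a unique unitary isomorphism
compatible with \<open>\<otimes>\<close>.\<close>

definition is_hilbert_tensor ::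
  "('a::chilbert_space \<Rightarrow> 'b::chilbert_space \<Rightarrow> 'h::chilbert_space) \<Rightarrow> bool" where
  "is_hilbert_tensor tp \<longleftrightarrow>
     (\<forall>a a' b. tp (a + a') b = tp a b + tp a' b) \<and>
     (\<forall>a b b'. tp a (b + b') = tp a b + tp a b') \<and>
     (\<forall>c a b. tp (scaleC c a) b = scaleC c (tp a b)) \<and>
     (\<forall>c a b. tp a (scaleC c b) = scaleC c (tp a b)) \<and>
     (\<forall>a b c d. cinner (tp a b) (tp c d) = cinner a c * cinner b d) \<and>
     closure (cspan (range (\<lambda>(a, b). tp a b))) = UNIV"

definition partial_inner ::
  "('a::chilbert_space \<Rightarrow> 'b::chilbert_space \<Rightarrow> 'h::chilbert_space) \<Rightarrow> 'h \<Rightarrow> 'b \<Rightarrow> 'a" where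
  "partial_inner tp f g =
     (THE L. clinear L \<and> continuous_on UNIV L \<and>
             (\<forall>a b. L (tp a b) = scaleC (cinner b g) a)) f"

definition T_zw ::
  "('a::chilbert_space \<Rightarrow> 'b::chilbert_space \<Rightarrow> 'h::chilbert_space) \<Rightarrow> ('g \<Rightarrow> 'b)
     \<Rightarrow> ('h \<Rightarrow> 'h) \<Rightarrow> 'g \<Rightarrow> 'g \<Rightarrow> 'a \<Rightarrow> 'a" where
  "T_zw tp \<psi> T z w = (\<lambda>h. partial_inner tp (T (tp h (\<psi> z))) (\<psi> w))"

text \<open>The group is written additively (class \<open>group_add\<close>, not necessarily commutative):
\<open>z + e\<close> is the group product \<open>ze\<close> and \<open>- e\<close> the inverse.\<close>

definition locally_compact_group :: "'g::{group_add, t2_space} itself \<Rightarrow> bool" where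
  "locally_compact_group _ \<longleftrightarrow>
     continuous_on UNIV (\<lambda>p::'g \<times> 'g. fst p + snd p) \<and>
     continuous_on UNIV (uminus :: 'g \<Rightarrow> 'g) \<and>
     (\<forall>x::'g. \<exists>U K. open U \<and> compact K \<and> x \<in> U \<and> U \<subseteq> K)"

definition is_left_haar :: "'g::{group_add, t2_space} measure \<Rightarrow> bool" where
  "is_left_haar \<mu> \<longleftrightarrow>
     sets \<mu> = sets borel \<and>
     (\<forall>x A. A \<in> sets borel \<longrightarrow> emeasure \<mu> ((\<lambda>y. x + y) ` A) = emeasure \<mu> A) \<and>
     (\<forall>K. compact K \<longrightarrow> emeasure \<mu> K < \<infinity>) \<and>
     (\<forall>U. open U \<and> U \<noteq> {} \<longrightarrow> emeasure \<mu> U > 0) \<and>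
     (\<forall>A \<in> sets borel. emeasure \<mu> A = (INF U \<in> {U. open U \<and> A \<subseteq> U}. emeasure \<mu> U)) \<and>
     (\<forall>U. open U \<longrightarrow> emeasure \<mu> U = (SUP K \<in> {K. compact K \<and> K \<subseteq> U}. emeasure \<mu> K))"

text \<open>The fixed sequence \<open>E\<^sub>N\<close>, \<open>N \<ge> 1\<close> (the value at \<open>0\<close> is irrelevant).\<close>

definition exhausting_seq :: "(nat \<Rightarrow> 'g::{group_add, topological_space} set) \<Rightarrow> bool" where
  "exhausting_seq E \<longleftrightarrow>
     (\<forall>N\<ge>1. open (E N) \<and> compact (closure (E N)) \<and> E N \<subseteq> E (Suc N) \<and>
             uminus ` E N = E N \<and> {x + y | x y. x \<in> E N \<and> y \<in> E N} \<subseteq> E (2 * N)) \<and>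
     (\<Union>N\<in>{1..}. E N) = UNIV"

definition cont_parseval_frame :: "'g::{group_add, t2_space} measure \<Rightarrow> ('g \<Rightarrow> 'b::chilbert_space) \<Rightarrow> bool" where
  "cont_parseval_frame \<mu> \<psi> \<longleftrightarrow>
     bounded (range \<psi>) \<and> continuous_on UNIV \<psi> \<and>
     (\<forall>f g. integrable \<mu> (\<lambda>z. cinner f (\<psi> z) * cinner (\<psi> z) g) \<and>
            cinner f g = (LINT z|\<mu>. cinner f (\<psi> z) * cinner (\<psi> z) g))"

text \<open>The filter \<open>z \<rightarrow> \<infinity>\<close>: eventually outside every compact set.\<close>

definition cocompact :: "'a::topological_space filter" where
  "cocompact = (INF K \<in> {K. compact K}. principal (- K))"

definition weakly_compact ::
  "('a::chilbert_space \<Rightarrow> 'b::chilbert_space \<Rightarrow> 'h::chilbert_space) \<Rightarrow> ('g::{group_add, t2_space} \<Rightarrow> 'b)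
     \<Rightarrow> (nat \<Rightarrow> 'g set) \<Rightarrow> ('h \<Rightarrow> 'h) \<Rightarrow> bool" where
  "weakly_compact tp \<psi> E T \<longleftrightarrow>
     (\<forall>z w. compact_operator (T_zw tp \<psi> T z w)) \<and>
     (\<forall>M\<ge>1. \<forall>\<epsilon>>0. eventually (\<lambda>z. \<forall>w \<in> (\<lambda>e. z + e) ` E M. onorm (T_zw tp \<psi> T z w) \<le> \<epsilon>) cocompact)"

end

theory Submission
  imports Defs
begin

(* The partial inner product u |-> <u, g>_H2 is the adjoint of a |-> a (x) g, so it has norm at
   most |g|, and T_(z,w) is T composed with bounded operators on both sides, hence compact.
   For the decay: as psi_z -> 0 weakly and psi is bounded, the vectors h (x) psi_z with |h| < 1
   tend to 0 weakly, uniformly in h (first on elementary tensors, then on their dense span).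
   A compact operator turns a bounded, uniformly weakly null family into a uniformly norm null
   one, so |T_(z,w)| <= 2 |psi_w| sup_(|h|<1) |T(h (x) psi_z)| tends to 0, uniformly in all w. *)

section \<open>Complex inner product spaces\<close>

lemma cinner_add_right: "cinner x (y + z) = cinner x y + cinner (x::'a::complex_inner) z"
  by (metis cinner_add_left cinner_commute complex_cnj_add)

lemma cinner_scaleC_right: "cinner x (scaleC r y) = cnj r * cinner (x::'a::complex_inner) y"
  by (metis cinner_scaleC_left cinner_commute complex_cnj_mult)

lemma cinner_zero_right [simp]: "cinner (x::'a::complex_inner) 0 = 0"
  using cinner_add_right[of x 0 0] by simp

lemma cinner_diff_left: "cinner (x - y) (z::'a::complex_inner) = cinner x z - cinner y z"
  using cinner_add_left[of "x - y" y z] by (simp add: eq_diff_eq)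

lemma cinner_diff_right: "cinner x (y - z::'a::complex_inner) = cinner x y - cinner x z"
  using cinner_add_right[of x "y - z" z] by (simp add: eq_diff_eq)

lemma cinner_self: "cinner x x = complex_of_real ((norm (x::'a::complex_inner))\<^sup>2)"
  using cinner_pos[of x] norm_eq_sqrt_cinner[of x] by (simp add: complex_eq_iff)

lemma scaleC_zero_left [simp]: "scaleC 0 (x::'a::complex_vector) = 0"
  using scaleC_add_left[of 0 0 x] by simp

lemma norm_scaleC: "norm (scaleC c x) = cmod c * norm (x::'a::complex_inner)"
proof -
  have "cinner (scaleC c x) (scaleC c x) = (c * cnj c) * cinner x x"
    by (simp add: cinner_scaleC_left cinner_scaleC_right)
  then have "complex_of_real ((norm (scaleC c x))\<^sup>2) = complex_of_real ((cmod c)\<^sup>2 * (norm x)\<^sup>2)"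
    by (simp only: cinner_self complex_norm_square[symmetric] of_real_mult)
  then have "(norm (scaleC c x))\<^sup>2 = (cmod c * norm x)\<^sup>2"
    by (simp only: of_real_eq_iff power_mult_distrib)
  then show ?thesis by (rule power2_eq_imp_eq) auto
qed

lemma cinner_eqI:
  fixes v w :: "'a::complex_inner"
  assumes "\<And>a. cinner a v = cinner a w"
  shows "v = w"
proof -
  have "cinner (v - w) (v - w) = 0"
    using assms[of "v - w"] by (simp add: cinner_diff_right)
  then show ?thesis by (simp add: cinner_eq_zero_iff)
qed

lemma norm_sub_projection_square:
  fixes x n :: "'a::complex_inner"
  assumes "n \<noteq> 0"
  shows "(norm (x + scaleC (- (cinner x n / complex_of_real ((norm n)\<^sup>2))) n))\<^sup>2
         = (norm x)\<^sup>2 - (cmod (cinner x n))\<^sup>2 / (norm n)\<^sup>2"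
proof -
  define a where "a = cinner x n"
  define N where "N = (norm n)\<^sup>2"
  define X where "X = (norm x)\<^sup>2"
  define t where "t = - (a / complex_of_real N)"
  have N: "N > 0" using assms by (simp add: N_def)
  have "complex_of_real ((norm (x + scaleC t n))\<^sup>2) = cinner (x + scaleC t n) (x + scaleC t n)"
    by (rule cinner_self[symmetric])
  also have "\<dots> = cinner x x + cnj t * a + t * cnj a + t * cnj t * cinner n n"
    by (simp add: cinner_add_left cinner_add_right cinner_scaleC_left cinner_scaleC_right
        a_def cinner_commute[of n x] algebra_simps)
  also have "\<dots> = of_real X - a * cnj a / of_real N"
    using N by (simp only: cinner_self X_def N_def[symmetric]) (simp add: t_def field_simps)
  also have "\<dots> = of_real (X - (cmod a)\<^sup>2 / N)"
    using complex_norm_square[of a] by simp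
  finally show ?thesis unfolding t_def a_def N_def X_def by (simp only: of_real_eq_iff)
qed

lemma norm_cinner_le: "cmod (cinner x y) \<le> norm x * norm (y::'a::complex_inner)"
proof (cases "y = 0")
  case False
  have "0 \<le> (norm x)\<^sup>2 - (cmod (cinner x y))\<^sup>2 / (norm y)\<^sup>2"
    using norm_sub_projection_square[OF False, of x] by (metis zero_le_power2)
  then have "(cmod (cinner x y))\<^sup>2 \<le> (norm x * norm y)\<^sup>2"
    using False by (simp add: field_simps power_mult_distrib)
  then show ?thesis by (rule power2_le_imp_le) simp
qed simp

lemma cinner_eq_0_if_norm_minimal:
  fixes x n :: "'a::complex_inner"
  assumes "\<And>t. norm x \<le> norm (x + scaleC t n)"
  shows "cinner x n = 0"
proof (cases "n = 0")
  case False
  let ?t = "- (cinner x n / complex_of_real ((norm n)\<^sup>2))"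
  have "(norm x)\<^sup>2 \<le> (norm (x + scaleC ?t n))\<^sup>2"
    using assms by (simp add: power_mono)
  then have "(cmod (cinner x n))\<^sup>2 / (norm n)\<^sup>2 \<le> 0"
    by (simp only: norm_sub_projection_square[OF False])
  then show ?thesis using False by (simp add: divide_le_0_iff)
qed simp

lemma parallelogram_law:
  "(norm (x + y))\<^sup>2 + (norm (x - y))\<^sup>2 = 2 * (norm x)\<^sup>2 + 2 * (norm (y::'a::complex_inner))\<^sup>2"
proof -
  have "cinner (x + y) (x + y) + cinner (x - y) (x - y) = 2 * cinner x x + 2 * cinner y y"
    by (simp add: cinner_add_left cinner_add_right cinner_diff_left cinner_diff_right algebra_simps)
  then have "complex_of_real ((norm (x + y))\<^sup>2 + (norm (x - y))\<^sup>2)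
      = complex_of_real (2 * (norm x)\<^sup>2 + 2 * (norm y)\<^sup>2)"
    by (simp add: cinner_self)
  then show ?thesis by (simp only: of_real_eq_iff)
qed

lemma norm_le_if_cinner_le:
  fixes v :: "'a::complex_inner"
  assumes "\<And>a. cmod (cinner a v) \<le> C * norm a" and "C \<ge> 0"
  shows "norm v \<le> C"
proof (cases "v = 0")
  case False
  have "norm v * norm v \<le> C * norm v"
    using assms(1)[of v] by (simp add: cinner_self norm_mult power2_eq_square)
  then show ?thesis using False by simp
qed (use assms in simp)

section \<open>The Riesz representation theorem\<close>

lemma Cauchy_if_dist_square_le:
  fixes X :: "nat \<Rightarrow> 'a::metric_space"
  assumes "\<And>m n. (dist (X m) (X n))\<^sup>2 \<le> f m + f n" and "f \<longlonglongrightarrow> 0"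
  shows "Cauchy X"
proof (rule metric_CauchyI)
  fix e :: real
  assume "e > 0"
  then have "eventually (\<lambda>n. f n < e\<^sup>2 / 2) sequentially"
    using assms(2) by (intro order_tendstoD) auto
  then obtain M where M: "\<And>n. n \<ge> M \<Longrightarrow> f n < e\<^sup>2 / 2"
    by (auto simp: eventually_sequentially)
  have "dist (X m) (X n) < e" if "m \<ge> M" "n \<ge> M" for m n
  proof -
    have "(dist (X m) (X n))\<^sup>2 < e\<^sup>2"
      using assms(1)[of m n] M[OF that(1)] M[OF that(2)] by linarith
    then show ?thesis using \<open>e > 0\<close> by (simp add: power2_less_imp_less)
  qed
  then show "\<exists>M. \<forall>m\<ge>M. \<forall>n\<ge>M. dist (X m) (X n) < e" by blast
qed

text \<open>The midpoint of two terms lies in \<open>S\<close> again, so the parallelogram law bounds their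
  distance by how far their norms are from the infimum.\<close>

lemma convex_minimising_sequence_Cauchy:
  fixes S :: "'a::complex_inner set"
  assumes "convex S" and XS: "\<And>n. X n \<in> S" and d_le: "\<And>y. y \<in> S \<Longrightarrow> d \<le> (norm y)\<^sup>2"
    and lim: "(\<lambda>n. (norm (X n))\<^sup>2) \<longlonglongrightarrow> d"
  shows "Cauchy X"
proof (rule Cauchy_if_dist_square_le)
  show "(dist (X m) (X n))\<^sup>2 \<le> 2 * ((norm (X m))\<^sup>2 - d) + 2 * ((norm (X n))\<^sup>2 - d)" for m n
  proof -
    have "(1/2) *\<^sub>R X m + (1/2) *\<^sub>R X n \<in> S"
      by (rule convexD[OF \<open>convex S\<close> XS XS]) auto
    then have "d \<le> (norm ((1/2) *\<^sub>R (X m + X n)))\<^sup>2"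
      by (simp add: d_le scaleR_right_distrib)
    then have "4 * d \<le> (norm (X m + X n))\<^sup>2"
      by (simp add: power2_eq_square)
    then show ?thesis using parallelogram_law[of "X m" "X n"] by (simp add: dist_norm)
  qed
  show "(\<lambda>n. 2 * ((norm (X n))\<^sup>2 - d)) \<longlonglongrightarrow> 0"
    using tendsto_mult[OF tendsto_const[of 2] tendsto_diff[OF lim tendsto_const[of d]]] by simp
qed

lemma closed_convex_has_min_norm:
  fixes S :: "'a::chilbert_space set"
  assumes "closed S" "convex S" "S \<noteq> {}"
  obtains x0 where "x0 \<in> S" "\<And>y. y \<in> S \<Longrightarrow> norm x0 \<le> norm y"
proof -
  define d where "d = Inf ((\<lambda>x. (norm x)\<^sup>2) ` S)"
  have bdd: "bdd_below ((\<lambda>x. (norm x)\<^sup>2) ` S)" by (rule bdd_belowI[of _ 0]) auto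
  have d_le: "d \<le> (norm y)\<^sup>2" if "y \<in> S" for y
    unfolding d_def using bdd that by (auto intro: cInf_lower)
  have "\<exists>x\<in>S. (norm x)\<^sup>2 < d + inverse (real (Suc n))" for n
    using cInf_less_iff[OF _ bdd, of "d + inverse (real (Suc n))"] assms(3)
    unfolding d_def by auto
  then obtain X where XS: "\<And>n. X n \<in> S" and X_lt: "\<And>n. (norm (X n))\<^sup>2 < d + inverse (real (Suc n))"
    by metis
  have norm_lim: "(\<lambda>n. (norm (X n))\<^sup>2) \<longlonglongrightarrow> d"
  proof (rule tendsto_sandwich[OF _ _ tendsto_const LIMSEQ_inverse_real_of_nat_add])
    show "eventually (\<lambda>n. d \<le> (norm (X n))\<^sup>2) sequentially"
      using d_le[OF XS] by simp
    show "eventually (\<lambda>n. (norm (X n))\<^sup>2 \<le> d + inverse (real (Suc n))) sequentially"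
      using less_imp_le[OF X_lt] by simp
  qed
  have "Cauchy X"
    by (rule convex_minimising_sequence_Cauchy[OF assms(2) XS d_le norm_lim])
  then obtain x0 where lim: "X \<longlonglongrightarrow> x0"
    using Cauchy_convergent convergent_def by blast
  have "x0 \<in> S" using closed_sequentially[OF assms(1)] XS lim by blast
  moreover have "(norm x0)\<^sup>2 = d"
    by (rule LIMSEQ_unique[OF tendsto_power[OF tendsto_norm[OF lim]] norm_lim])
  then have "norm x0 \<le> norm y" if "y \<in> S" for y
    by (rule power2_le_imp_le[OF ord_eq_le_trans[OF _ d_le[OF that]]]) simp
  ultimately show ?thesis by (rule that)
qed

text \<open>The representing vector is a rescaled element of minimal norm on the affine hyperplane
  \<open>\<phi> = 1\<close>, which is orthogonal to the kernel of \<open>\<phi>\<close>.\<close>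

lemma riesz_representation:
  fixes \<phi> :: "'a::chilbert_space \<Rightarrow> complex"
  assumes add: "\<And>x y. \<phi> (x + y) = \<phi> x + \<phi> y"
    and scale: "\<And>c x. \<phi> (scaleC c x) = c * \<phi> x"
    and bounded: "\<And>x. cmod (\<phi> x) \<le> K * norm x"
  obtains v where "\<And>x. \<phi> x = cinner x v"
proof (cases "\<forall>x. \<phi> x = 0")
  case True
  then show ?thesis using that[of 0] by simp
next
  case False
  then obtain x1 where x1: "\<phi> x1 \<noteq> 0" by auto
  have scaleR: "\<phi> (r *\<^sub>R x) = of_real r * \<phi> x" for r x
    by (simp add: scaleR_scaleC scale)
  have "bounded_linear \<phi>"
    by (rule bounded_linear_intro[where K = K])
      (simp_all add: add scaleR scaleR_conv_of_real bounded mult.commute)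
  define S where "S = {x. \<phi> x = 1}"
  have "closed S" unfolding S_def
    by (rule closed_Collect_eq) (simp_all add: linear_continuous_on \<open>bounded_linear \<phi>\<close>)
  moreover have "convex S"
    by (rule convexI) (simp add: S_def add scaleR flip: of_real_add)
  moreover have "scaleC (1 / \<phi> x1) x1 \<in> S"
    using x1 by (simp add: S_def scale)
  ultimately obtain x0 where x0S: "x0 \<in> S" and x0_min: "\<And>y. y \<in> S \<Longrightarrow> norm x0 \<le> norm y"
    using closed_convex_has_min_norm by blast
  have \<phi>x0: "\<phi> x0 = 1" using x0S by (simp add: S_def)
  have "\<phi> 0 = 0" using add[of 0 0] by simp
  with \<phi>x0 have x0_ne: "x0 \<noteq> 0" by auto
  have orth: "cinner x0 n = 0" if "\<phi> n = 0" for n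
    by (rule cinner_eq_0_if_norm_minimal, rule x0_min) (simp add: S_def add scale \<phi>x0 that)
  show ?thesis
  proof (rule that)
    fix x
    have "\<phi> (x - scaleC (\<phi> x) x0) = 0"
      using add[of "x - scaleC (\<phi> x) x0" "scaleC (\<phi> x) x0"] by (simp add: scale \<phi>x0)
    then have "cinner (x - scaleC (\<phi> x) x0) x0 = 0"
      using orth cinner_commute by (metis complex_cnj_zero)
    then have "cinner x x0 = \<phi> x * cinner x0 x0"
      by (simp add: cinner_diff_left cinner_scaleC_left)
    then show "\<phi> x = cinner x (scaleC (complex_of_real (1 / (norm x0)\<^sup>2)) x0)"
      using x0_ne by (simp add: cinner_scaleC_right cinner_self field_simps)
  qed
qed

section \<open>Complex linear maps and adjoints\<close>

lemma clinear_add: "clinear f \<Longrightarrow> f (x + y) = f x + f y"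
  by (simp add: clinear_def)

lemma clinear_scaleC: "clinear f \<Longrightarrow> f (scaleC c x) = scaleC c (f x)"
  by (simp add: clinear_def)

lemma clinear_scaleR: "clinear f \<Longrightarrow> f (scaleR r x) = scaleR r (f x)"
  by (simp add: scaleR_scaleC clinear_scaleC)

lemma clinear_zero: "clinear f \<Longrightarrow> f 0 = 0"
  using clinear_scaleC[of f 0 0] by simp

lemma clinear_compose: "clinear f \<Longrightarrow> clinear g \<Longrightarrow> clinear (\<lambda>x. f (g x))"
  by (simp add: clinear_def)

lemma clinear_sum_scaleC:
  assumes "clinear f"
  shows "f (\<Sum>v\<in>F. scaleC (c v) v) = (\<Sum>v\<in>F. scaleC (c v) (f v))"
  by (induction F rule: infinite_finite_induct)
    (simp_all add: clinear_zero[OF assms] clinear_add[OF assms] clinear_scaleC[OF assms])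

lemma bounded_linear_if_clinear:
  assumes "clinear f" and "\<And>x. norm (f x) \<le> K * norm x"
  shows "bounded_linear f"
  by (rule bounded_linear_intro[where K = K])
    (simp_all add: clinear_add[OF assms(1)] clinear_scaleR[OF assms(1)] assms(2) mult.commute)

lemma clinear_norm_le_if_unit_ball:
  fixes f :: "'a::complex_inner \<Rightarrow> 'b::complex_inner"
  assumes "clinear f" and "\<And>x. norm x < 1 \<Longrightarrow> norm (f x) \<le> C"
  shows "norm (f x) \<le> 2 * C * norm x"
proof (cases "x = 0")
  case False
  let ?r = "1 / (2 * norm x)"
  have "norm (?r *\<^sub>R x) < 1" using False by simp
  then have "norm (f (?r *\<^sub>R x)) \<le> C" by (rule assms(2))
  then have "?r * norm (f x) \<le> C" by (simp add: clinear_scaleR[OF assms(1)])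
  then show ?thesis using False by (simp add: field_simps)
qed (simp add: clinear_zero[OF assms(1)])

lemma clinear_eq_on_closure_cspan:
  fixes f g :: "'a::complex_inner \<Rightarrow> 'b::complex_inner"
  assumes "clinear f" "clinear g" "continuous_on UNIV f" "continuous_on UNIV g"
    and "\<And>x. x \<in> D \<Longrightarrow> f x = g x" and "x \<in> closure (cspan D)"
  shows "f x = g x"
proof -
  have "cspan D \<subseteq> {x. f x = g x}"
  proof
    fix x
    assume "x \<in> cspan D"
    then obtain F c where "F \<subseteq> D" and x: "x = (\<Sum>v\<in>F. scaleC (c v) v)"
      by (auto simp: cspan_def)
    then have "(\<Sum>v\<in>F. scaleC (c v) (f v)) = (\<Sum>v\<in>F. scaleC (c v) (g v))"
      using assms(5) by (intro sum.cong) auto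
    then show "x \<in> {x. f x = g x}"
      by (simp add: x clinear_sum_scaleC[OF assms(1)] clinear_sum_scaleC[OF assms(2)])
  qed
  then have "closure (cspan D) \<subseteq> {x. f x = g x}"
    by (rule closure_minimal) (rule closed_Collect_eq[OF assms(3,4)])
  with assms(6) show ?thesis by blast
qed

lemma tendsto_zero_on_cspan:
  fixes L :: "'z \<Rightarrow> 'a::complex_inner \<Rightarrow> 'b::complex_inner"
  assumes lin: "\<And>z. clinear (L z)" and lim: "\<And>x. x \<in> D \<Longrightarrow> ((\<lambda>z. L z x) \<longlongrightarrow> 0) F"
    and "y \<in> cspan D"
  shows "((\<lambda>z. L z y) \<longlongrightarrow> 0) F"
proof -
  obtain G c where "G \<subseteq> D" and y: "y = (\<Sum>v\<in>G. scaleC (c v) v)"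
    using \<open>y \<in> cspan D\<close> by (auto simp: cspan_def)
  have "((\<lambda>z. scaleC (c v) (L z v)) \<longlongrightarrow> 0) F" if "v \<in> G" for v
  proof -
    have "((\<lambda>z. cmod (c v) * norm (L z v)) \<longlongrightarrow> 0) F"
      using lim \<open>G \<subseteq> D\<close> that by (intro tendsto_mult_right_zero tendsto_norm_zero) auto
    then show ?thesis by (subst tendsto_norm_zero_iff[symmetric]) (simp add: norm_scaleC)
  qed
  then show ?thesis
    by (simp add: y clinear_sum_scaleC[OF lin] tendsto_null_sum)
qed

lemma tendsto_zero_on_closure_cspan:
  fixes L :: "'z \<Rightarrow> 'a::complex_inner \<Rightarrow> 'b::complex_inner"
  assumes lin: "\<And>z. clinear (L z)" and bound: "\<And>z x. norm (L z x) \<le> B * norm x"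
    and lim: "\<And>x. x \<in> D \<Longrightarrow> ((\<lambda>z. L z x) \<longlongrightarrow> 0) F" and x: "x \<in> closure (cspan D)"
  shows "((\<lambda>z. L z x) \<longlongrightarrow> 0) F"
proof (rule tendstoI)
  fix e :: real
  assume "e > 0"
  define \<eta> where "\<eta> = e / (2 * (\<bar>B\<bar> + 1))"
  have "\<eta> > 0" using \<open>e > 0\<close> by (simp add: \<eta>_def)
  then obtain y where y: "y \<in> cspan D" "dist y x < \<eta>"
    using x closure_approachable by blast
  have close: "norm (L z x - L z y) < e / 2" for z
  proof -
    have "norm (L z x - L z y) = norm (L z (x - y))"
      using clinear_add[OF lin, of z "x - y" y] by simp
    also have "\<dots> \<le> B * norm (x - y)" by (rule bound)
    also have "\<dots> \<le> \<bar>B\<bar> * norm (x - y)" by (simp add: mult_right_mono)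
    also have "\<dots> \<le> \<bar>B\<bar> * \<eta>"
      using y(2) by (intro mult_left_mono) (auto simp: dist_norm norm_minus_commute)
    also have "\<dots> < e / 2"
      using \<open>e > 0\<close> by (simp add: \<eta>_def field_simps)
    finally show ?thesis .
  qed
  have "eventually (\<lambda>z. dist (L z y) 0 < e / 2) F"
    using tendstoD[OF tendsto_zero_on_cspan[OF lin lim y(1)], of "e / 2"] \<open>e > 0\<close> by simp
  then show "eventually (\<lambda>z. dist (L z x) 0 < e) F"
  proof (rule eventually_mono)
    fix z
    assume "dist (L z y) 0 < e / 2"
    then show "dist (L z x) 0 < e"
      using close[of z] norm_triangle_ineq[of "L z x - L z y" "L z y"] by simp
  qed
qed

definition cadjoint :: "('a::complex_inner \<Rightarrow> 'b::complex_inner) \<Rightarrow> 'b \<Rightarrow> 'a" where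
  "cadjoint A y = (SOME v. \<forall>x. cinner (A x) y = cinner x v)"

lemma norm_cinner_le_onorm:
  assumes "bounded_linear A"
  shows "cmod (cinner (A x) y) \<le> onorm A * norm y * norm x"
proof -
  have "cmod (cinner (A x) y) \<le> norm (A x) * norm y" by (rule norm_cinner_le)
  also have "\<dots> \<le> onorm A * norm x * norm y"
    by (rule mult_right_mono[OF onorm[OF assms]]) simp
  finally show ?thesis by (simp only: mult_ac)
qed

lemma cinner_cadjoint:
  fixes A :: "'a::chilbert_space \<Rightarrow> 'b::complex_inner"
  assumes "clinear A" "bounded_linear A"
  shows "cinner (A x) y = cinner x (cadjoint A y)"
proof -
  have "\<exists>v. \<forall>x. cinner (A x) y = cinner x v"
  proof (rule riesz_representation[of "\<lambda>x. cinner (A x) y" "onorm A * norm y"])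
    show "cinner (A (x + x')) y = cinner (A x) y + cinner (A x') y" for x x'
      by (simp add: clinear_add[OF assms(1)] cinner_add_left)
    show "cinner (A (scaleC c x)) y = c * cinner (A x) y" for c x
      by (simp add: clinear_scaleC[OF assms(1)] cinner_scaleC_left)
    show "cmod (cinner (A x) y) \<le> onorm A * norm y * norm x" for x
      by (rule norm_cinner_le_onorm[OF assms(2)])
  qed blast
  then show ?thesis
    unfolding cadjoint_def by (rule someI2_ex) blast
qed

lemma clinear_cadjoint:
  fixes A :: "'a::chilbert_space \<Rightarrow> 'b::complex_inner"
  assumes "clinear A" "bounded_linear A"
  shows "clinear (cadjoint A)"
  unfolding clinear_def
proof (intro conjI allI; rule cinner_eqI)
  show "cinner a (cadjoint A (x + y)) = cinner a (cadjoint A x + cadjoint A y)" for a x y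
    by (simp add: cinner_cadjoint[OF assms, symmetric] cinner_add_right)
  show "cinner a (cadjoint A (scaleC c x)) = cinner a (scaleC c (cadjoint A x))" for a c x
    by (simp add: cinner_cadjoint[OF assms, symmetric] cinner_scaleC_right)
qed

lemma norm_cadjoint_le:
  fixes A :: "'a::chilbert_space \<Rightarrow> 'b::complex_inner"
  assumes "clinear A" "bounded_linear A"
  shows "norm (cadjoint A y) \<le> onorm A * norm y"
  by (rule norm_le_if_cinner_le)
    (simp_all add: cinner_cadjoint[OF assms, symmetric] norm_cinner_le_onorm[OF assms(2)]
      onorm_pos_le[OF assms(2)])

section \<open>Tensor products and the partial inner product\<close>

lemma clinear_hilbert_tensor_left: "is_hilbert_tensor tp \<Longrightarrow> clinear (\<lambda>a. tp a b)"
  by (simp add: is_hilbert_tensor_def clinear_def)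

lemma cinner_hilbert_tensor:
  "is_hilbert_tensor tp \<Longrightarrow> cinner (tp a b) (tp c d) = cinner a c * cinner b d"
  by (simp add: is_hilbert_tensor_def)

lemma closure_cspan_hilbert_tensor:
  "is_hilbert_tensor tp \<Longrightarrow> closure (cspan (range (\<lambda>(a, b). tp a b))) = UNIV"
  by (simp add: is_hilbert_tensor_def)

lemma norm_hilbert_tensor:
  assumes "is_hilbert_tensor tp"
  shows "norm (tp a b) = norm a * norm b"
proof -
  have "complex_of_real ((norm (tp a b))\<^sup>2) = complex_of_real ((norm a * norm b)\<^sup>2)"
    by (simp only: cinner_self[symmetric] cinner_hilbert_tensor[OF assms] power_mult_distrib
        of_real_mult)
  then have "(norm (tp a b))\<^sup>2 = (norm a * norm b)\<^sup>2" by (simp only: of_real_eq_iff)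
  then show ?thesis by (rule power2_eq_imp_eq) auto
qed

lemma bounded_linear_hilbert_tensor_left:
  "is_hilbert_tensor tp \<Longrightarrow> bounded_linear (\<lambda>a. tp a b)"
  by (rule bounded_linear_if_clinear[where K = "norm b"])
    (simp_all add: clinear_hilbert_tensor_left norm_hilbert_tensor)

lemma onorm_hilbert_tensor_left_le:
  "is_hilbert_tensor tp \<Longrightarrow> onorm (\<lambda>a. tp a b) \<le> norm b"
  by (rule onorm_bound) (simp_all add: norm_hilbert_tensor)

lemma cadjoint_hilbert_tensor_left:
  assumes tp: "is_hilbert_tensor tp"
  shows "cadjoint (\<lambda>a. tp a g) (tp a' b) = scaleC (cinner b g) a'"
proof (rule cinner_eqI)
  fix a
  have "cinner a (cadjoint (\<lambda>a. tp a g) (tp a' b)) = cinner a a' * cinner g b"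
    by (simp add: cinner_cadjoint[OF clinear_hilbert_tensor_left[OF tp]
          bounded_linear_hilbert_tensor_left[OF tp], symmetric] cinner_hilbert_tensor[OF tp])
  then show "cinner a (cadjoint (\<lambda>a. tp a g) (tp a' b)) = cinner a (scaleC (cinner b g) a')"
    by (simp add: cinner_scaleC_right cinner_commute[of b g] mult.commute)
qed

lemma partial_inner_eq_cadjoint:
  assumes tp: "is_hilbert_tensor tp"
  shows "partial_inner tp u g = cadjoint (\<lambda>a. tp a g) u"
proof -
  let ?A = "\<lambda>a. tp a g"
  note A = clinear_hilbert_tensor_left[OF tp] bounded_linear_hilbert_tensor_left[OF tp]
  have cont: "continuous_on UNIV (cadjoint ?A)"
    by (intro linear_continuous_on bounded_linear_if_clinear[OF clinear_cadjoint[OF A]])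
      (rule norm_cadjoint_le[OF A])
  have "(THE L. clinear L \<and> continuous_on UNIV L \<and> (\<forall>a b. L (tp a b) = scaleC (cinner b g) a))
      = cadjoint ?A"
  proof (rule the_equality)
    show "clinear (cadjoint ?A) \<and> continuous_on UNIV (cadjoint ?A)
        \<and> (\<forall>a b. cadjoint ?A (tp a b) = scaleC (cinner b g) a)"
      by (simp add: clinear_cadjoint[OF A] cont cadjoint_hilbert_tensor_left[OF tp])
  next
    fix L
    assume L: "clinear L \<and> continuous_on UNIV L \<and> (\<forall>a b. L (tp a b) = scaleC (cinner b g) a)"
    show "L = cadjoint ?A"
    proof
      fix x
      show "L x = cadjoint ?A x"
        by (rule clinear_eq_on_closure_cspan[where D = "range (\<lambda>(a, b). tp a b)"])
          (use L cont in \<open>auto simp: clinear_cadjoint[OF A] cadjoint_hilbert_tensor_left[OF tp]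
            closure_cspan_hilbert_tensor[OF tp]\<close>)
    qed
  qed
  then show ?thesis by (simp add: partial_inner_def)
qed

lemma cinner_partial_inner:
  assumes tp: "is_hilbert_tensor tp"
  shows "cinner (tp a g) u = cinner a (partial_inner tp u g)"
  by (simp add: partial_inner_eq_cadjoint[OF tp] cinner_cadjoint[OF clinear_hilbert_tensor_left[OF tp]
        bounded_linear_hilbert_tensor_left[OF tp]])

lemma partial_inner_hilbert_tensor:
  "is_hilbert_tensor tp \<Longrightarrow> partial_inner tp (tp a b) g = scaleC (cinner b g) a"
  by (simp add: partial_inner_eq_cadjoint cadjoint_hilbert_tensor_left)

lemma clinear_partial_inner:
  "is_hilbert_tensor tp \<Longrightarrow> clinear (\<lambda>u. partial_inner tp u g)"
  by (simp add: partial_inner_eq_cadjoint clinear_cadjoint clinear_hilbert_tensor_left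
      bounded_linear_hilbert_tensor_left)

lemma norm_partial_inner_le:
  assumes tp: "is_hilbert_tensor tp"
  shows "norm (partial_inner tp u g) \<le> norm g * norm u"
proof -
  note A = clinear_hilbert_tensor_left[OF tp] bounded_linear_hilbert_tensor_left[OF tp]
  have "norm (partial_inner tp u g) \<le> onorm (\<lambda>a. tp a g) * norm u"
    by (simp add: partial_inner_eq_cadjoint[OF tp] norm_cadjoint_le[OF A])
  also have "\<dots> \<le> norm g * norm u"
    by (rule mult_right_mono[OF onorm_hilbert_tensor_left_le[OF tp]]) simp
  finally show ?thesis .
qed

lemma bounded_linear_partial_inner:
  "is_hilbert_tensor tp \<Longrightarrow> bounded_linear (\<lambda>u. partial_inner tp u g)"
  by (rule bounded_linear_if_clinear[where K = "norm g"])
    (simp_all add: clinear_partial_inner norm_partial_inner_le)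

lemma partial_inner_tendsto_zero:
  assumes tp: "is_hilbert_tensor tp" and bound: "\<And>z. norm (\<psi> z) \<le> B"
    and weak: "\<And>b. ((\<lambda>z. cinner (\<psi> z) b) \<longlongrightarrow> 0) F"
  shows "((\<lambda>z. partial_inner tp u (\<psi> z)) \<longlongrightarrow> 0) F"
proof (rule tendsto_zero_on_closure_cspan[where D = "range (\<lambda>(a, b). tp a b)"])
  show "norm (partial_inner tp u (\<psi> z)) \<le> B * norm u" for z u
    using norm_partial_inner_le[OF tp, of u "\<psi> z"] mult_right_mono[OF bound[of z], of "norm u"]
    by simp
  show "((\<lambda>z. partial_inner tp x (\<psi> z)) \<longlongrightarrow> 0) F" if "x \<in> range (\<lambda>(a, b). tp a b)" for x
  proof -
    obtain a b where x: "x = tp a b" using \<open>x \<in> range _\<close> by auto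
    have "((\<lambda>z. norm (cinner (\<psi> z) b) * norm a) \<longlongrightarrow> 0) F"
      by (intro tendsto_mult_left_zero tendsto_norm_zero weak)
    then show ?thesis
      by (subst tendsto_norm_zero_iff[symmetric])
        (simp add: x partial_inner_hilbert_tensor[OF tp] norm_scaleC cinner_commute[of b])
  qed
qed (simp_all add: clinear_partial_inner[OF tp] closure_cspan_hilbert_tensor[OF tp])

section \<open>Compact operators\<close>

lemma compact_operator_clinear: "compact_operator T \<Longrightarrow> clinear T"
  by (simp add: compact_operator_def)

lemma compact_operator_in_scaled_image:
  assumes T: "compact_operator T" and x: "norm x < R"
  shows "T x \<in> (\<lambda>y. R *\<^sub>R y) ` closure (T ` ball 0 1)"
proof (rule image_eqI)
  have "R > 0" using x norm_ge_zero[of x] by linarith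
  show "T x = R *\<^sub>R T ((1 / R) *\<^sub>R x)"
    using \<open>R > 0\<close> by (simp add: clinear_scaleR[OF compact_operator_clinear[OF T]])
  have "(1 / R) *\<^sub>R x \<in> ball 0 1" using x \<open>R > 0\<close> by (simp add: field_simps)
  then show "T ((1 / R) *\<^sub>R x) \<in> closure (T ` ball 0 1)"
    by (rule subsetD[OF closure_subset imageI])
qed

lemma compact_operator_bounded_linear:
  assumes T: "compact_operator T"
  shows "bounded_linear T"
proof -
  have "bounded (closure (T ` ball 0 1))"
    using T by (simp add: compact_operator_def compact_imp_bounded)
  then obtain C where C: "\<And>y. y \<in> closure (T ` ball 0 1) \<Longrightarrow> norm y \<le> C"
    unfolding bounded_iff by blast
  have "norm (T x) \<le> C" if "norm x < 1" for x
  proof (rule C)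
    have "T x \<in> T ` ball 0 1" by (rule imageI) (simp add: that)
    then show "T x \<in> closure (T ` ball 0 1)" by (rule subsetD[OF closure_subset])
  qed
  then show ?thesis
    by (rule bounded_linear_if_clinear[OF compact_operator_clinear[OF T]
          clinear_norm_le_if_unit_ball[OF compact_operator_clinear[OF T]]])
qed

lemma compact_operator_compose:
  fixes A :: "'a::complex_inner \<Rightarrow> 'b::complex_inner"
    and T :: "'b \<Rightarrow> 'c::complex_inner" and P :: "'c \<Rightarrow> 'd::complex_inner"
  assumes A: "clinear A" "bounded_linear A" and T: "compact_operator T"
    and P: "clinear P" "bounded_linear P"
  shows "compact_operator (\<lambda>x. P (T (A x)))"
proof -
  define R where "R = onorm A + 1"
  define K where "K = P ` (\<lambda>y. R *\<^sub>R y) ` closure (T ` ball 0 1)"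
  have "compact K"
    unfolding K_def using T
    by (intro compact_continuous_image linear_continuous_on[OF P(2)] compact_scaling)
      (simp add: compact_operator_def)
  let ?S = "(\<lambda>x. P (T (A x))) ` ball 0 1"
  have "?S \<subseteq> K"
  proof clarify
    fix x :: 'a
    assume "x \<in> ball 0 1"
    then have "norm (A x) < R"
      using onorm[OF A(2), of x] onorm_pos_le[OF A(2)] mult_left_le[of "norm x" "onorm A"]
      by (simp add: R_def)
    then show "P (T (A x)) \<in> K"
      unfolding K_def by (intro imageI compact_operator_in_scaled_image[OF T])
  qed
  then have "closure ?S \<subseteq> K"
    by (rule closure_minimal) (rule compact_imp_closed[OF \<open>compact K\<close>])
  moreover have "compact (K \<inter> closure ?S)"
    by (rule compact_Int_closed[OF \<open>compact K\<close> closed_closure])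
  ultimately have "compact (closure ?S)" by (simp add: Int_absorb1)
  with clinear_compose[OF P(1) clinear_compose[OF compact_operator_clinear[OF T] A(1)]]
  show ?thesis by (simp add: compact_operator_def)
qed

lemma norm_square_le_cinner_split:
  fixes v y :: "'a::complex_inner"
  shows "(norm v)\<^sup>2 \<le> norm v * norm (v - y) + cmod (cinner v y)"
proof -
  have "(norm v)\<^sup>2 = Re (cinner v (v - y)) + Re (cinner v y)"
    by (simp add: cinner_diff_right cinner_self)
  also have "\<dots> \<le> norm v * norm (v - y) + cmod (cinner v y)"
    by (intro add_mono order_trans[OF complex_Re_le_cmod norm_cinner_le] complex_Re_le_cmod)
  finally show ?thesis .
qed

text \<open>Compare \<open>T x\<close> with a finite \<open>\<eta>\<close>-net \<open>Y\<close> of the relatively compact set containing it,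
  and test \<open>x\<close> against the adjoint images of \<open>Y\<close>.\<close>

lemma compact_operator_uniformly_weakly_null:
  fixes T :: "'a::chilbert_space \<Rightarrow> 'b::complex_inner"
  assumes T: "compact_operator T"
    and bounded: "\<And>z x. x \<in> X z \<Longrightarrow> norm x < R"
    and weak: "\<And>u e. e > 0 \<Longrightarrow> eventually (\<lambda>z. \<forall>x\<in>X z. cmod (cinner x u) \<le> e) F"
    and "\<delta> > 0"
  shows "eventually (\<lambda>z. \<forall>x\<in>X z. norm (T x) \<le> \<delta>) F"
proof -
  note T_lin = compact_operator_clinear[OF T] compact_operator_bounded_linear[OF T]
  define K where "K = (\<lambda>y. R *\<^sub>R y) ` closure (T ` ball 0 1)"
  have "compact K"
    unfolding K_def using T by (intro compact_scaling) (simp add: compact_operator_def)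
  then obtain C where "C > 0" and C: "\<And>y. y \<in> K \<Longrightarrow> norm y \<le> C"
    using compact_imp_bounded[of K] unfolding bounded_pos by blast
  define \<eta> where "\<eta> = \<delta>\<^sup>2 / (C + 1)"
  have "\<eta> > 0" using \<open>\<delta> > 0\<close> \<open>C > 0\<close> by (simp add: \<eta>_def)
  have cover: "K \<subseteq> (\<Union>y\<in>K. ball y \<eta>)" using \<open>\<eta> > 0\<close> by auto
  obtain Y where "finite Y" and net: "K \<subseteq> (\<Union>y\<in>Y. ball y \<eta>)"
    by (rule compactE_image[OF \<open>compact K\<close> _ cover]) auto
  have "eventually (\<lambda>z. \<forall>x\<in>X z. cmod (cinner x (cadjoint T y)) \<le> \<eta>) F" for y
    using weak[OF \<open>\<eta> > 0\<close>] .
  then have "eventually (\<lambda>z. \<forall>y\<in>Y. \<forall>x\<in>X z. cmod (cinner x (cadjoint T y)) \<le> \<eta>) F"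
    by (intro eventually_ball_finite[OF \<open>finite Y\<close>] ballI)
  then show ?thesis
  proof (rule eventually_mono, intro ballI)
    fix z x
    assume adj: "\<forall>y\<in>Y. \<forall>x\<in>X z. cmod (cinner x (cadjoint T y)) \<le> \<eta>" and "x \<in> X z"
    have "T x \<in> K"
      unfolding K_def by (rule compact_operator_in_scaled_image[OF T bounded[OF \<open>x \<in> X z\<close>]])
    then obtain y where "y \<in> Y" and "T x \<in> ball y \<eta>"
      using net by blast
    then have "norm (T x - y) < \<eta>" by (simp add: dist_norm norm_minus_commute)
    have "(norm (T x))\<^sup>2 \<le> norm (T x) * norm (T x - y) + cmod (cinner (T x) y)"
      by (rule norm_square_le_cinner_split)
    also have "\<dots> \<le> C * \<eta> + \<eta>"
    proof (rule add_mono)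
      show "norm (T x) * norm (T x - y) \<le> C * \<eta>"
        using C[OF \<open>T x \<in> K\<close>] \<open>norm (T x - y) < \<eta>\<close> \<open>C > 0\<close> by (intro mult_mono) auto
      show "cmod (cinner (T x) y) \<le> \<eta>"
        using adj \<open>y \<in> Y\<close> \<open>x \<in> X z\<close> by (simp add: cinner_cadjoint[OF T_lin])
    qed
    also have "\<dots> = (C + 1) * \<eta>" by (simp add: algebra_simps)
    also have "\<dots> = \<delta>\<^sup>2" using \<open>C > 0\<close> by (simp add: \<eta>_def)
    finally show "norm (T x) \<le> \<delta>"
      by (rule power2_le_imp_le) (use \<open>\<delta> > 0\<close> in simp)
  qed
qed

section \<open>The operators \<open>T\<^sub>(\<^sub>z\<^sub>,\<^sub>w\<^sub>)\<close>\<close>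

lemma compact_operator_T_zw:
  assumes tp: "is_hilbert_tensor tp" and T: "compact_operator T"
  shows "compact_operator (T_zw tp \<psi> T z w)"
  unfolding T_zw_def
  by (rule compact_operator_compose[OF clinear_hilbert_tensor_left[OF tp]
        bounded_linear_hilbert_tensor_left[OF tp] T clinear_partial_inner[OF tp]
        bounded_linear_partial_inner[OF tp]])

lemma eventually_norm_compact_tensor_le:
  assumes tp: "is_hilbert_tensor tp" and T: "compact_operator T"
    and bound: "\<And>z. norm (\<psi> z) \<le> B" and weak: "\<And>b. ((\<lambda>z. cinner (\<psi> z) b) \<longlongrightarrow> 0) F"
    and "\<delta> > 0"
  shows "eventually (\<lambda>z. \<forall>h. norm h < 1 \<longrightarrow> norm (T (tp h (\<psi> z))) \<le> \<delta>) F"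
proof -
  have "eventually (\<lambda>z. \<forall>x\<in>(\<lambda>h. tp h (\<psi> z)) ` ball 0 1. norm (T x) \<le> \<delta>) F"
  proof (rule compact_operator_uniformly_weakly_null[OF T _ _ \<open>\<delta> > 0\<close>])
    show "norm x < B + 1" if x: "x \<in> (\<lambda>h. tp h (\<psi> z)) ` ball 0 1" for x z
    proof -
      obtain h where "norm h < 1" and "x = tp h (\<psi> z)" using x by auto
      then have "norm x \<le> norm (\<psi> z)"
        by (simp add: norm_hilbert_tensor[OF tp] mult_left_le_one_le)
      with bound[of z] show ?thesis by linarith
    qed
    show "eventually (\<lambda>z. \<forall>x\<in>(\<lambda>h. tp h (\<psi> z)) ` ball 0 1. cmod (cinner x u) \<le> e) F"
      if "e > 0" for u e
    proof -
      have "eventually (\<lambda>z. norm (partial_inner tp u (\<psi> z)) < e) F"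
        using tendstoD[OF partial_inner_tendsto_zero[OF tp bound weak] \<open>e > 0\<close>] by simp
      then show ?thesis
      proof (rule eventually_mono, clarify)
        fix z h
        assume "norm (partial_inner tp u (\<psi> z)) < e" and "h \<in> ball (0::'a) 1"
        then show "cmod (cinner (tp h (\<psi> z)) u) \<le> e"
          using norm_cinner_le[of h "partial_inner tp u (\<psi> z)"]
            mult_left_le_one_le[of "norm (partial_inner tp u (\<psi> z))" "norm h"]
          by (simp add: cinner_partial_inner[OF tp])
      qed
    qed
  qed
  then show ?thesis by (simp add: ball_def dist_norm)
qed

lemma eventually_onorm_T_zw_le:
  assumes tp: "is_hilbert_tensor tp" and T: "compact_operator T"
    and bound: "\<And>z. norm (\<psi> z) \<le> B" and weak: "\<And>b. ((\<lambda>z. cinner (\<psi> z) b) \<longlongrightarrow> 0) F"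
    and "\<epsilon> > 0"
  shows "eventually (\<lambda>z. \<forall>w. onorm (T_zw tp \<psi> T z w) \<le> \<epsilon>) F"
proof -
  have "B \<ge> 0" using norm_ge_zero[of "\<psi> undefined"] bound[of undefined] by linarith
  define \<delta> where "\<delta> = \<epsilon> / (2 * (B + 1))"
  have "\<delta> > 0" using \<open>\<epsilon> > 0\<close> \<open>B \<ge> 0\<close> by (simp add: \<delta>_def)
  show ?thesis
  proof (rule eventually_mono[OF eventually_norm_compact_tensor_le[OF tp T bound weak \<open>\<delta> > 0\<close>]],
      intro allI onorm_bound)
    fix z w h
    assume small: "\<forall>h. norm h < 1 \<longrightarrow> norm (T (tp h (\<psi> z))) \<le> \<delta>"
    have T_small: "norm (T (tp h (\<psi> z))) \<le> 2 * \<delta> * norm h"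
      using small by (intro clinear_norm_le_if_unit_ball[OF clinear_compose[OF
            compact_operator_clinear[OF T] clinear_hilbert_tensor_left[OF tp]]]) auto
    have "norm (T_zw tp \<psi> T z w h) \<le> norm (\<psi> w) * norm (T (tp h (\<psi> z)))"
      unfolding T_zw_def by (rule norm_partial_inner_le[OF tp])
    also have "\<dots> \<le> B * (2 * \<delta> * norm h)"
      using bound \<open>B \<ge> 0\<close> T_small by (intro mult_mono) simp_all
    also have "\<dots> \<le> \<epsilon> * norm h"
      using \<open>\<epsilon> > 0\<close> \<open>B \<ge> 0\<close> by (simp add: \<delta>_def field_simps mult_right_mono)
    finally show "norm (T_zw tp \<psi> T z w h) \<le> \<epsilon> * norm h" .
  qed (use \<open>\<epsilon> > 0\<close> in simp)
qed

theorem proposition4p4: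
  fixes tp :: "'a::chilbert_space \<Rightarrow> 'b::chilbert_space \<Rightarrow> 'h::chilbert_space"
    and \<mu> :: "'g::{group_add, t2_space} measure"
    and E :: "nat \<Rightarrow> 'g set"
    and \<psi> :: "'g \<Rightarrow> 'b"
    and T :: "'h \<Rightarrow> 'h"
  assumes "separable_type TYPE('a)" and "separable_type TYPE('b)"
    and "locally_compact_group TYPE('g)" and "separable_type TYPE('g)"
    and "is_left_haar \<mu>"
    and "exhausting_seq E"
    and "cont_parseval_frame \<mu> \<psi>"
    and "is_hilbert_tensor tp"
    and "compact_operator T"
    and "\<forall>g. ((\<lambda>z. cinner (\<psi> z) g) \<longlongrightarrow> 0) cocompact"
  shows "weakly_compact tp \<psi> E T"
proof -
  obtain B where bound: "\<And>z. norm (\<psi> z) \<le> B"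
    using assms(7) unfolding cont_parseval_frame_def bounded_iff by blast
  have weak: "\<And>g. ((\<lambda>z. cinner (\<psi> z) g) \<longlongrightarrow> 0) cocompact"
    using assms(10) by blast
  show ?thesis
    unfolding weakly_compact_def
  proof (intro conjI allI impI)
    show "compact_operator (T_zw tp \<psi> T z w)" for z w
      by (rule compact_operator_T_zw[OF assms(8,9)])
    show "eventually (\<lambda>z. \<forall>w \<in> (\<lambda>e. z + e) ` E M. onorm (T_zw tp \<psi> T z w) \<le> \<epsilon>) cocompact"
      if "\<epsilon> > 0" for M :: nat and \<epsilon> :: real
      using eventually_onorm_T_zw_le[OF assms(8,9) bound weak \<open>\<epsilon> > 0\<close>]
      by (rule eventually_mono) blast
  qed
qed

end
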